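(* Let $X\in\mathscr X(x,[0,T])$, $Y\in\mathscr X(y,[0,T])$, and let $\tau$ be a stopping time with $\tau\le T$. Then there exists a sequence $(\tau_n)$ of stopping times such that: $\tau\le\tau_n\le T$ for all $n$; on $\{\tau<T\}$ one has $\tau_n\downarrow\tau$ $\mathbb P$-a.s.; and on $\{\tau_n<T\}$ one has $\Delta X_{\tau_n}=\Delta Y_{\tau_n}=0$ $\mathbb P$-a.s.
   Context: Let $(\Omega,(\mathscr F_t)_{t\ge0},\mathscr F,\mathbb P)$ be a filtered probability space with right-continuous filtration and trivial $\mathscr F_0$, and $T>0$, $x,y\in\mathbb{R}$. $\mathscr X(z,[0,T])$ is the set of processes $(Z_t)_{t\ge0-}$ with $Z_{0-}=z$, $(Z_t)_{t\ge0}$ adapted, paths a.s. right-continuous and bounded, with finite and a.s. (uniformly) bounded total variation, and $Z_t=0$ a.s. for all $t\ge T$. $\Delta Z_t=Z_t-Z_{t-}$. *)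

theory Defs
  imports "HOL-Probability.Probability"
begin

definition filtered_prob_space :: "'a measure \<Rightarrow> (real \<Rightarrow> 'a measure) \<Rightarrow> bool" where
  "filtered_prob_space M F \<longleftrightarrow>
     prob_space M \<and>
     (\<forall>t\<ge>0. space (F t) = space M \<and> sets (F t) \<subseteq> sets M) \<and>
     (\<forall>s t. 0 \<le> s \<and> s \<le> t \<longrightarrow> sets (F s) \<subseteq> sets (F t)) \<and>
     (\<forall>t\<ge>0. sets (F t) = (\<Inter>s\<in>{t<..}. sets (F s))) \<and>
     (\<forall>A\<in>sets (F 0). measure M A = 0 \<or> measure M A = 1)"

definition is_stopping_time :: "'a measure \<Rightarrow> (real \<Rightarrow> 'a measure) \<Rightarrow> ('a \<Rightarrow> real) \<Rightarrow> bool" where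
  "is_stopping_time M F \<tau> \<longleftrightarrow>
     (\<forall>\<omega>\<in>space M. 0 \<le> \<tau> \<omega>) \<and> (\<forall>t\<ge>0. {\<omega>\<in>space M. \<tau> \<omega> \<le> t} \<in> sets (F t))"

definition total_variation :: "(real \<Rightarrow> real) \<Rightarrow> ereal" where
  "total_variation f =
     (SUP ts \<in> {ts :: real list. sorted ts}.
        ereal (\<Sum>i<length ts - 1. \<bar>f (ts ! Suc i) - f (ts ! i)\<bar>))"

text \<open>Processes are functions Z :: real \<Rightarrow> 'a \<Rightarrow> real; the value at time 0- is
  encoded by Z t = z for all t < 0, so that Z(0-) = z and the total variation
  over the real line includes the initial jump Z 0 - z.\<close>

definition left_value :: "(real \<Rightarrow> 'a \<Rightarrow> real) \<Rightarrow> real \<Rightarrow> 'a \<Rightarrow> real" where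
  "left_value Z t \<omega> = Lim (at_left t) (\<lambda>s. Z s \<omega>)"

definition jump :: "(real \<Rightarrow> 'a \<Rightarrow> real) \<Rightarrow> real \<Rightarrow> 'a \<Rightarrow> real" where
  "jump Z t \<omega> = Z t \<omega> - left_value Z t \<omega>"

definition admissible :: "'a measure \<Rightarrow> (real \<Rightarrow> 'a measure) \<Rightarrow> real \<Rightarrow> real
    \<Rightarrow> (real \<Rightarrow> 'a \<Rightarrow> real) \<Rightarrow> bool" where
  "admissible M F z T Z \<longleftrightarrow>
     (\<forall>t<0. \<forall>\<omega>\<in>space M. Z t \<omega> = z) \<and>
     (\<forall>t\<ge>0. Z t \<in> borel_measurable (F t)) \<and>
     (AE \<omega> in M. (\<forall>t\<ge>0. continuous (at_right t) (\<lambda>s. Z s \<omega>))) \<and>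
     (AE \<omega> in M. bounded (range (\<lambda>t. Z t \<omega>))) \<and>
     (\<exists>C::real. AE \<omega> in M. total_variation (\<lambda>t. Z t \<omega>) \<le> ereal C) \<and>
     (\<forall>t\<ge>T. AE \<omega> in M. Z t \<omega> = 0)"

end

theory Submission
  imports Defs
begin

text \<open>A process of bounded variation has left limits, and at a fixed time \<open>t\<close> it can
  jump with positive probability only if, for some \<open>e, d > 0\<close>, an oscillation of size
  \<open>e\<close> just before \<open>t\<close> has probability more than \<open>d\<close>. Since a path of variation at
  most \<open>C\<close> has fewer than \<open>C / e\<close> such oscillation times, integrating shows that
  fewer than \<open>C / (e d)\<close> times qualify; hence the times at which \<open>X\<close> or \<open>Y\<close> jumps
  with positive probability form a countable set \<open>B\<close>. Some translate \<open>c + D\<close> of the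
  dyadic rationals \<open>D\<close> misses \<open>B\<close>, and rounding \<open>\<tau>\<close> up to the grid
  \<open>c + 2\<^sup>-\<^sup>n \<int>\<close> (capped at \<open>T\<close>) gives the stopping times \<open>\<tau>\<^sub>n\<close>.\<close>

section \<open>Variation sums\<close>

definition variation_sum :: "(real \<Rightarrow> real) \<Rightarrow> real list \<Rightarrow> real" where
  "variation_sum f ts = (\<Sum>i<length ts - 1. \<bar>f (ts ! Suc i) - f (ts ! i)\<bar>)"

lemma variation_sum_snoc:
  assumes "ts \<noteq> []"
  shows "variation_sum f (ts @ [x]) = variation_sum f ts + \<bar>f x - f (last ts)\<bar>"
proof -
  obtain n where n: "length ts = Suc n" using assms by (cases ts) auto
  have "variation_sum f (ts @ [x])
      = (\<Sum>i<n. \<bar>f ((ts @ [x]) ! Suc i) - f ((ts @ [x]) ! i)\<bar>) + \<bar>f x - f (last ts)\<bar>"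
    unfolding variation_sum_def using n assms by (simp add: nth_append last_conv_nth)
  also have "(\<Sum>i<n. \<bar>f ((ts @ [x]) ! Suc i) - f ((ts @ [x]) ! i)\<bar>) = variation_sum f ts"
    unfolding variation_sum_def using n by (intro sum.cong) (auto simp: nth_append)
  finally show ?thesis .
qed

lemma variation_sum_append_pair:
  "variation_sum f ts + \<bar>f v - f u\<bar> \<le> variation_sum f (ts @ [u, v])"
proof (cases "ts = []")
  case True
  then show ?thesis using variation_sum_snoc[of "[u]" f v] by (simp add: variation_sum_def)
next
  case False
  then show ?thesis
    using variation_sum_snoc[of ts f u] variation_sum_snoc[of "ts @ [u]" f v] by simp
qed

lemma variation_sum_le_total_variation:
  assumes "total_variation f \<le> ereal C" "sorted ts"
  shows "variation_sum f ts \<le> C"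
proof -
  have "ereal (variation_sum f ts) \<le> total_variation f"
    unfolding total_variation_def variation_sum_def
    by (rule SUP_upper2[where i = ts]) (use assms(2) in auto)
  then show ?thesis using assms(1) by (metis ereal_less_eq(3) order_trans)
qed

text \<open>Each time in \<open>S\<close> at which \<open>f\<close> deviates by more than \<open>e\<close> from values
  arbitrarily close to its left contributes a separate increment to a single grid.\<close>

lemma variation_sum_ge_card_left_oscillations:
  fixes f :: "real \<Rightarrow> real"
  assumes "finite S"
    and "\<forall>t\<in>S. \<forall>d>0. \<exists>s. t - d < s \<and> s < t \<and> e < \<bar>f t - f s\<bar>"
  shows "\<exists>ts. sorted ts \<and> (\<forall>x\<in>set ts. x \<le> Max S) \<and> real (card S) * e \<le> variation_sum f ts"
  using assms
proof (induction S rule: finite_linorder_max_induct)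
  case empty
  show ?case by (intro exI[of _ "[]"]) (simp add: variation_sum_def)
next
  case (insert b A)
  have Max_insert: "Max (insert b A) = b"
    using insert.hyps by (intro Max_eqI) auto
  obtain ts where ts: "sorted ts" "\<forall>x\<in>set ts. x < b" "real (card A) * e \<le> variation_sum f ts"
  proof (cases "A = {}")
    case True
    then show ?thesis by (intro that[of "[]"]) (simp_all add: variation_sum_def)
  next
    case False
    with insert obtain ts where "sorted ts" "\<forall>x\<in>set ts. x \<le> Max A"
        "real (card A) * e \<le> variation_sum f ts" by auto
    moreover have "Max A < b" using insert.hyps False by auto
    ultimately show ?thesis by (intro that[of ts]) auto
  qed
  define m where "m = Max (insert (b - 1) (set ts))"
  have "m < b" using ts(2) by (simp add: m_def)
  then obtain s where s: "m < s" "s < b" "e < \<bar>f b - f s\<bar>"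
    using insert.prems[rule_format, of b "b - m"] by auto
  have card_insert: "card (insert b A) = Suc (card A)" using insert.hyps by auto
  have "x < s" if "x \<in> set ts" for x
    using that s(1) Max_ge[of "insert (b - 1) (set ts)" x] by (simp add: m_def)
  then have "sorted (ts @ [s, b])"
    using ts(1,2) s(2) by (auto simp: sorted_append intro: less_imp_le)
  moreover have "real (card (insert b A)) * e \<le> variation_sum f (ts @ [s, b])"
    using variation_sum_append_pair[of f ts b s] ts(3) s(3) card_insert by (simp add: algebra_simps)
  ultimately show ?case
    using ts(2) s(2) Max_insert by (intro exI[of _ "ts @ [s, b]"]) (auto intro: less_imp_le)
qed

lemma bounded_variation_left_limit:
  fixes f :: "real \<Rightarrow> real"
  assumes TV: "total_variation f \<le> ereal C"
  shows "\<exists>L. (f \<longlongrightarrow> L) (at_left t)"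
proof (rule ccontr)
  assume no_limit: "\<nexists>L. (f \<longlongrightarrow> L) (at_left t)"
  have "\<not> cauchy_filter (filtermap f (at_left t))"
  proof
    assume "cauchy_filter (filtermap f (at_left t))"
    moreover have "filtermap f (at_left t) \<noteq> bot" by (simp add: filtermap_bot_iff)
    ultimately obtain L where "filtermap f (at_left t) \<le> nhds L"
      using cauchy_filter_complete_converges[OF _ complete_UNIV] by auto
    with no_limit show False by (simp add: filterlim_def)
  qed
  then obtain e where e: "e > 0"
    and E: "\<And>P. eventually P (at_left t) \<Longrightarrow> \<exists>x y. P x \<and> P y \<and> e \<le> dist (f x) (f y)"
    unfolding cauchy_filter_metric_filtermap by (auto simp: not_less)
  have oscillation: "\<exists>u v. b < u \<and> u \<le> v \<and> v < t \<and> e \<le> \<bar>f v - f u\<bar>" if "b < t" for b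
  proof -
    obtain x y where xy: "x \<in> {b<..<t}" "y \<in> {b<..<t}" "e \<le> dist (f x) (f y)"
      using E[OF eventually_at_left_real[OF \<open>b < t\<close>]] by blast
    show ?thesis
    proof (cases "x \<le> y")
      case True
      with xy show ?thesis by (intro exI[of _ x] exI[of _ y]) (auto simp: dist_real_def abs_minus_commute)
    next
      case False
      with xy show ?thesis by (intro exI[of _ y] exI[of _ x]) (auto simp: dist_real_def)
    qed
  qed
  have "\<exists>ts. sorted ts \<and> ts \<noteq> [] \<and> (\<forall>x\<in>set ts. x < t) \<and> real N * e \<le> variation_sum f ts" for N
  proof (induction N)
    case 0
    show ?case by (intro exI[of _ "[t - 1]"]) (auto simp: variation_sum_def)
  next
    case (Suc N)
    then obtain ts where ts: "sorted ts" "ts \<noteq> []" "\<forall>x\<in>set ts. x < t"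
        "real N * e \<le> variation_sum f ts" by blast
    obtain u v where uv: "Max (set ts) < u" "u \<le> v" "v < t" "e \<le> \<bar>f v - f u\<bar>"
      using oscillation[of "Max (set ts)"] ts(2,3) by auto
    have "sorted (ts @ [u, v])"
      using ts(1,2) uv by (force simp: sorted_append)
    moreover have "real (Suc N) * e \<le> variation_sum f (ts @ [u, v])"
      using ts(4) uv(4) variation_sum_append_pair[of f ts v u] by (simp add: algebra_simps)
    ultimately show ?case
      using ts(3) uv by (intro exI[of _ "ts @ [u, v]"]) auto
  qed
  then have "real N * e \<le> C" for N
    using variation_sum_le_total_variation[OF TV] by (meson order_trans)
  moreover obtain N where "C / e < real N" using reals_Archimedean2 by blast
  ultimately show False using e by (simp add: field_simps) (meson not_le)
qed

section \<open>Fixed times of jumps of bounded-variation processes\<close>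

text \<open>Working with the left-approach sequence \<open>t - 1/(k+1)\<close> instead of \<open>at_left t\<close>
  keeps these sets measurable without any path regularity.\<close>

definition left_oscillation_set :: "'a measure \<Rightarrow> (real \<Rightarrow> 'a \<Rightarrow> real) \<Rightarrow> real \<Rightarrow> real \<Rightarrow> 'a set" where
  "left_oscillation_set M Z t e =
     {\<omega>\<in>space M. \<exists>m. \<forall>k\<ge>m. e < \<bar>Z t \<omega> - Z (t - 1 / real (Suc k)) \<omega>\<bar>}"

lemma sets_left_oscillation_set:
  assumes "\<And>s. Z s \<in> borel_measurable M"
  shows "left_oscillation_set M Z t e \<in> sets M"
proof -
  have "left_oscillation_set M Z t e =
      (\<Union>m. \<Inter>k\<in>{m..}. {\<omega>\<in>space M. e < \<bar>Z t \<omega> - Z (t - 1 / real (Suc k)) \<omega>\<bar>})"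
    unfolding left_oscillation_set_def by auto
  also have "\<dots> \<in> sets M"
    using assms by measurable
  finally show ?thesis .
qed

lemma left_oscillation_set_oscillates:
  assumes "\<omega> \<in> left_oscillation_set M Z t e" "d > 0"
  shows "\<exists>s. t - d < s \<and> s < t \<and> e < \<bar>Z t \<omega> - Z s \<omega>\<bar>"
proof -
  obtain m where m: "\<forall>k\<ge>m. e < \<bar>Z t \<omega> - Z (t - 1 / real (Suc k)) \<omega>\<bar>"
    using assms(1) unfolding left_oscillation_set_def by auto
  obtain n :: nat where n: "1 / d < real n" using reals_Archimedean2 by blast
  define k where "k = max m n"
  have "1 / d < real (Suc k)" using n by (simp add: k_def)
  then have "1 / real (Suc k) < d" using assms(2) by (simp add: field_simps)
  moreover have "e < \<bar>Z t \<omega> - Z (t - 1 / real (Suc k)) \<omega>\<bar>" using m by (simp add: k_def)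
  ultimately show ?thesis by (intro exI[of _ "t - 1 / real (Suc k)"]) auto
qed

lemma finite_likely_left_oscillation_times:
  assumes "prob_space M"
    and meas: "\<And>s. Z s \<in> borel_measurable M"
    and TV: "AE \<omega> in M. total_variation (\<lambda>t. Z t \<omega>) \<le> ereal C"
    and "e > 0" "d > 0"
  shows "finite {t. d < measure M (left_oscillation_set M Z t e)}"
proof -
  interpret prob_space M by fact
  let ?A = "\<lambda>t. left_oscillation_set M Z t e"
  have A: "?A t \<in> sets M" for t using sets_left_oscillation_set[OF meas] .
  have "card S \<le> nat \<lceil>C / e / d\<rceil>"
    if S: "S \<subseteq> {t. d < measure M (?A t)}" "finite S" for S
  proof -
    have path_count: "AE \<omega> in M. (\<Sum>t\<in>S. indicator (?A t) \<omega>) \<le> C / e"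
      using TV
    proof eventually_elim
      case (elim \<omega>)
      let ?S = "{t\<in>S. \<omega> \<in> ?A t}"
      have "\<forall>t\<in>?S. \<forall>d>0. \<exists>s. t - d < s \<and> s < t \<and> e < \<bar>Z t \<omega> - Z s \<omega>\<bar>"
        using left_oscillation_set_oscillates[of \<omega> M Z _ e] by blast
      then obtain ts where "sorted ts" "real (card ?S) * e \<le> variation_sum (\<lambda>t. Z t \<omega>) ts"
        using variation_sum_ge_card_left_oscillations[where f = "\<lambda>t. Z t \<omega>" and S = ?S and e = e] S(2) by auto
      then have "real (card ?S) * e \<le> C"
        using variation_sum_le_total_variation[OF elim] by (meson order_trans)
      moreover have "(\<Sum>t\<in>S. indicator (?A t) \<omega>) = real (card ?S)"
        using S(2) by (simp add: indicator_def sum.If_cases Int_def conj_commute)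
      ultimately show ?case using \<open>e > 0\<close> by (simp add: field_simps)
    qed
    have "real (card S) * d = (\<Sum>t\<in>S. d)" by simp
    also have "\<dots> \<le> (\<Sum>t\<in>S. measure M (?A t))"
      using S by (intro sum_mono) auto
    also have "\<dots> = (\<integral>\<omega>. (\<Sum>t\<in>S. indicator (?A t) \<omega>) \<partial>M)"
      by (subst Bochner_Integration.integral_sum)
         (auto simp: A emeasure_eq_measure intro!: integrable_real_indicator)
    also have "\<dots> \<le> (\<integral>\<omega>. C / e \<partial>M)"
      using path_count
      by (intro integral_mono_AE Bochner_Integration.integrable_sum integrable_real_indicator)
         (auto simp: A emeasure_eq_measure)
    also have "\<dots> = C / e" by (simp add: prob_space)
    finally have "real (card S) \<le> C / e / d" using \<open>d > 0\<close> by (subst pos_le_divide_eq) auto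
    then show ?thesis by linarith
  qed
  then show ?thesis using finite_if_finite_subsets_card_bdd by blast
qed

lemma jump_imp_left_oscillation:
  fixes f :: "real \<Rightarrow> real"
  assumes L: "(f \<longlongrightarrow> L) (at_left t)" and "f t \<noteq> L"
  shows "\<exists>j m. \<forall>k\<ge>m. 1 / real (Suc j) < \<bar>f t - f (t - 1 / real (Suc k))\<bar>"
proof -
  define h where "h = \<bar>f t - L\<bar> / 2"
  have "h > 0" using \<open>f t \<noteq> L\<close> by (simp add: h_def)
  then obtain j where j: "inverse (real (Suc j)) < h" using reals_Archimedean by blast
  have "filterlim (\<lambda>k. t - 1 / real (Suc k)) (at_left t) sequentially"
  proof (rule tendsto_imp_filterlim_at_left)
    show "(\<lambda>k. t - 1 / real (Suc k)) \<longlonglongrightarrow> t"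
      using tendsto_diff[OF tendsto_const[of t] LIMSEQ_inverse_real_of_nat]
      by (simp add: divide_inverse)
  qed simp
  then have "(\<lambda>k. f (t - 1 / real (Suc k))) \<longlonglongrightarrow> L"
    using filterlim_compose[OF L] by (simp add: o_def)
  then obtain m where m: "\<forall>k\<ge>m. \<bar>f (t - 1 / real (Suc k)) - L\<bar> < h"
    using \<open>h > 0\<close> by (auto dest!: tendstoD simp: eventually_sequentially dist_real_def)
  have "1 / real (Suc j) < \<bar>f t - f (t - 1 / real (Suc k))\<bar>" if "k \<ge> m" for k
  proof -
    have "\<bar>f t - L\<bar> \<le> \<bar>f t - f (t - 1 / real (Suc k))\<bar> + \<bar>f (t - 1 / real (Suc k)) - L\<bar>"
      by linarith
    moreover have "1 / real (Suc j) < h" using j by (simp add: divide_inverse)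
    ultimately show ?thesis using m that unfolding h_def by fastforce
  qed
  then show ?thesis by blast
qed

lemma countable_nonnull_jump_times:
  assumes "prob_space M"
    and meas: "\<And>s. Z s \<in> borel_measurable M"
    and TV: "AE \<omega> in M. total_variation (\<lambda>t. Z t \<omega>) \<le> ereal C"
  shows "countable {t. \<not> (AE \<omega> in M. jump Z t \<omega> = 0)}"
proof -
  interpret prob_space M by fact
  let ?A = "\<lambda>t j. left_oscillation_set M Z t (1 / real (Suc j))"
  have null_oscillations_imp_AE_no_jump: "AE \<omega> in M. jump Z t \<omega> = 0"
    if null: "\<forall>j. measure M (?A t j) = 0" for t
  proof -
    have "AE \<omega> in M. \<forall>j. \<omega> \<notin> ?A t j"
      using null sets_left_oscillation_set[OF meas]
      by (simp add: AE_all_countable AE_not_in emeasure_eq_measure null_sets_def)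
    then show ?thesis
      using TV AE_space
    proof eventually_elim
      case (elim \<omega>)
      obtain L where L: "((\<lambda>s. Z s \<omega>) \<longlongrightarrow> L) (at_left t)"
        using bounded_variation_left_limit[OF elim(2)] by blast
      then have "left_value Z t \<omega> = L"
        unfolding left_value_def by (intro tendsto_Lim) auto
      moreover have "Z t \<omega> = L"
        using jump_imp_left_oscillation[OF L] elim(1,3) unfolding left_oscillation_set_def by blast
      ultimately show ?case by (simp add: jump_def)
    qed
  qed
  have jump_times_subset: "{t. \<not> (AE \<omega> in M. jump Z t \<omega> = 0)} \<subseteq>
      (\<Union>j. \<Union>i. {t. 1 / real (Suc i) < measure M (?A t j)})"
  proof
    fix t assume "t \<in> {t. \<not> (AE \<omega> in M. jump Z t \<omega> = 0)}"
    then obtain j where "measure M (?A t j) \<noteq> 0"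
      using null_oscillations_imp_AE_no_jump by blast
    then have "0 < measure M (?A t j)" using measure_nonneg[of M "?A t j"] by linarith
    then obtain i where "inverse (real (Suc i)) < measure M (?A t j)"
      using reals_Archimedean by blast
    then show "t \<in> (\<Union>j. \<Union>i. {t. 1 / real (Suc i) < measure M (?A t j)})"
      by (auto simp: divide_inverse)
  qed
  have finite_level: "finite {t. 1 / real (Suc i) < measure M (?A t j)}" for i j
    by (rule finite_likely_left_oscillation_times[OF \<open>prob_space M\<close> meas TV]) auto
  show ?thesis
    by (rule countable_subset[OF jump_times_subset], rule countable_UN, simp, rule countable_UN, simp,
        rule countable_finite[OF finite_level])
qed

section \<open>Rounding stopping times up to a dyadic grid\<close>

lemma filtered_prob_spaceD:
  assumes "filtered_prob_space M F"
  shows "prob_space M"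
    and "0 \<le> t \<Longrightarrow> space (F t) = space M"
    and "0 \<le> t \<Longrightarrow> sets (F t) \<subseteq> sets M"
    and "0 \<le> s \<Longrightarrow> s \<le> t \<Longrightarrow> sets (F s) \<subseteq> sets (F t)"
proof -
  have "prob_space M \<and> (\<forall>t\<ge>0. space (F t) = space M \<and> sets (F t) \<subseteq> sets M) \<and>
      (\<forall>s t. 0 \<le> s \<and> s \<le> t \<longrightarrow> sets (F s) \<subseteq> sets (F t))"
    \<comment> \<open>the right-continuity conjunct is dropped here: as a rewrite rule it loops\<close>
    using assms unfolding filtered_prob_space_def by (elim conjE) (intro conjI; assumption)
  then show "prob_space M"
    and "0 \<le> t \<Longrightarrow> space (F t) = space M"
    and "0 \<le> t \<Longrightarrow> sets (F t) \<subseteq> sets M"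
    and "0 \<le> s \<Longrightarrow> s \<le> t \<Longrightarrow> sets (F s) \<subseteq> sets (F t)"
    by simp_all
qed

lemma admissible_measurable:
  assumes "filtered_prob_space M F" and Z: "admissible M F z T Z"
  shows "Z s \<in> borel_measurable M"
proof (cases "s \<ge> 0")
  case True
  have "Z s \<in> borel_measurable (F s)"
    using Z True unfolding admissible_def by blast
  moreover have "subalgebra M (F s)"
    using filtered_prob_spaceD[OF assms(1)] True unfolding subalgebra_def by blast
  ultimately show ?thesis by (rule measurable_from_subalg[rotated])
next
  case False
  then have "\<omega> \<in> space M \<Longrightarrow> Z s \<omega> = z" for \<omega>
    using Z unfolding admissible_def by simp
  then show ?thesis using measurable_cong[of M "Z s" "\<lambda>_. z"] by simp
qed

lemma admissible_countable_nonnull_jump_times: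
  assumes "filtered_prob_space M F" and Z: "admissible M F z T Z"
  shows "countable {t. \<not> (AE \<omega> in M. jump Z t \<omega> = 0)}"
proof -
  obtain C where "AE \<omega> in M. total_variation (\<lambda>t. Z t \<omega>) \<le> ereal C"
    using Z unfolding admissible_def by blast
  moreover have "prob_space M" using filtered_prob_spaceD(1)[OF assms(1)] .
  ultimately show ?thesis
    using countable_nonnull_jump_times admissible_measurable[OF assms] by blast
qed

lemma stopping_time_less_sets:
  assumes F: "filtered_prob_space M F" and \<tau>: "is_stopping_time M F \<tau>"
    and "p \<le> t" "0 \<le> t"
  shows "{\<omega>\<in>space M. \<tau> \<omega> < p} \<in> sets (F t)"
proof -
  let ?q = "\<lambda>k. p - 1 / real (Suc k)"
  have union: "{\<omega>\<in>space M. \<tau> \<omega> < p} = (\<Union>k. {\<omega>\<in>space M. \<tau> \<omega> \<le> ?q k})"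
  proof safe
    fix \<omega> assume "\<omega> \<in> space M" "\<tau> \<omega> < p"
    then obtain k where "inverse (real (Suc k)) < p - \<tau> \<omega>"
      using reals_Archimedean[of "p - \<tau> \<omega>"] by auto
    with \<open>\<omega> \<in> space M\<close> show "\<omega> \<in> (\<Union>k. {\<omega>\<in>space M. \<tau> \<omega> \<le> ?q k})"
      by (auto simp: divide_inverse intro!: exI[of _ k])
  next
    fix \<omega> k assume "\<tau> \<omega> \<le> ?q k"
    moreover have "0 < 1 / real (Suc k)" by simp
    ultimately show "\<tau> \<omega> < p" by linarith
  qed
  have "{\<omega>\<in>space M. \<tau> \<omega> \<le> ?q k} \<in> sets (F t)" for k
  proof (cases "0 \<le> ?q k")
    case True
    moreover have "?q k \<le> t"
      using \<open>p \<le> t\<close> divide_nonneg_nonneg[of 1 "real (Suc k)"] by linarith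
    ultimately have "sets (F (?q k)) \<subseteq> sets (F t)"
      by (rule filtered_prob_spaceD(4)[OF F])
    moreover have "{\<omega>\<in>space M. \<tau> \<omega> \<le> ?q k} \<in> sets (F (?q k))"
      using \<tau> True unfolding is_stopping_time_def by blast
    ultimately show ?thesis by blast
  next
    case False
    have "\<forall>\<omega>\<in>space M. 0 \<le> \<tau> \<omega>" using \<tau> unfolding is_stopping_time_def by blast
    with False have "{\<omega>\<in>space M. \<tau> \<omega> \<le> ?q k} = {}" by fastforce
    then show ?thesis by (metis sets.empty_sets)
  qed
  then have "range (\<lambda>k. {\<omega>\<in>space M. \<tau> \<omega> \<le> ?q k}) \<subseteq> sets (F t)" by blast
  then show ?thesis unfolding union by (rule sets.countable_UN)
qed

text \<open>The least point of the grid \<open>c + 2\<^sup>-\<^sup>n \<int>\<close> strictly above \<open>r\<close>.\<close>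

definition next_grid_point :: "real \<Rightarrow> nat \<Rightarrow> real \<Rightarrow> real" where
  "next_grid_point c n r = c + (of_int \<lfloor>(r - c) * 2 ^ n\<rfloor> + 1) / 2 ^ n"

lemma less_next_grid_point: "r < next_grid_point c n r"
proof -
  have "(r - c) * 2 ^ n < of_int \<lfloor>(r - c) * 2 ^ n\<rfloor> + 1" by linarith
  then show ?thesis unfolding next_grid_point_def by (simp add: field_simps)
qed

lemma next_grid_point_le: "next_grid_point c n r \<le> r + 1 / 2 ^ n"
proof -
  have "of_int \<lfloor>(r - c) * 2 ^ n\<rfloor> / 2 ^ n \<le> r - c"
    by (simp add: pos_divide_le_eq)
  then show ?thesis unfolding next_grid_point_def by (simp add: add_divide_distrib)
qed

lemma next_grid_point_Suc_le: "next_grid_point c (Suc n) r \<le> next_grid_point c n r"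
proof -
  define x where "x = (r - c) * 2 ^ n"
  have "2 * x < 2 * of_int \<lfloor>x\<rfloor> + 2" by linarith
  then have "\<lfloor>2 * x\<rfloor> < 2 * \<lfloor>x\<rfloor> + 2" by (simp add: floor_less_iff)
  then have "\<lfloor>2 * x\<rfloor> + 1 \<le> 2 * (\<lfloor>x\<rfloor> + 1)" by presburger
  then have "real_of_int (\<lfloor>2 * x\<rfloor> + 1) \<le> 2 * real_of_int (\<lfloor>x\<rfloor> + 1)" by linarith
  then have "(of_int \<lfloor>2 * x\<rfloor> + 1) / (2 * 2 ^ n) \<le> (2 * (of_int \<lfloor>x\<rfloor> + 1)) / (2 * (2::real) ^ n)"
    by (intro divide_right_mono) simp_all
  also have "\<dots> = (of_int \<lfloor>x\<rfloor> + 1) / 2 ^ n"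
    by (rule mult_divide_mult_cancel_left) simp
  finally have "(of_int \<lfloor>2 * x\<rfloor> + 1) / 2 ^ Suc n \<le> (of_int \<lfloor>x\<rfloor> + 1) / (2::real) ^ n"
    by simp
  moreover have x2: "(r - c) * 2 ^ Suc n = 2 * x" by (simp add: x_def)
  ultimately show ?thesis unfolding next_grid_point_def x2 x_def[symmetric] by simp
qed

lemma next_grid_point_le_iff:
  "next_grid_point c n r \<le> t \<longleftrightarrow> r < c + of_int \<lfloor>(t - c) * 2 ^ n\<rfloor> / 2 ^ n"
proof -
  have "next_grid_point c n r \<le> t \<longleftrightarrow> of_int \<lfloor>(r - c) * 2 ^ n\<rfloor> + 1 \<le> (t - c) * 2 ^ n"
    unfolding next_grid_point_def by (simp add: field_simps)
  also have "\<dots> \<longleftrightarrow> \<lfloor>(r - c) * 2 ^ n\<rfloor> + 1 \<le> \<lfloor>(t - c) * 2 ^ n\<rfloor>"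
    by (metis le_floor_iff of_int_1 of_int_add)
  also have "\<dots> \<longleftrightarrow> \<lfloor>(r - c) * 2 ^ n\<rfloor> < \<lfloor>(t - c) * 2 ^ n\<rfloor>" by linarith
  also have "\<dots> \<longleftrightarrow> (r - c) * 2 ^ n < of_int \<lfloor>(t - c) * 2 ^ n\<rfloor>"
    by (simp add: floor_less_iff)
  also have "\<dots> \<longleftrightarrow> r < c + of_int \<lfloor>(t - c) * 2 ^ n\<rfloor> / 2 ^ n" by (simp add: field_simps)
  finally show ?thesis .
qed

lemma grid_point_le: "c + of_int \<lfloor>(t - c) * 2 ^ n\<rfloor> / 2 ^ n \<le> (t::real)"
proof -
  have "of_int \<lfloor>(t - c) * 2 ^ n\<rfloor> \<le> (t - c) * 2 ^ n" by simp
  then show ?thesis by (simp add: field_simps)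
qed

lemma stopping_time_min_next_grid_point:
  assumes F: "filtered_prob_space M F" and \<tau>: "is_stopping_time M F \<tau>" and "0 \<le> T"
  shows "is_stopping_time M F (\<lambda>\<omega>. min T (next_grid_point c n (\<tau> \<omega>)))"
  unfolding is_stopping_time_def
proof (intro conjI ballI allI impI)
  fix \<omega> assume "\<omega> \<in> space M"
  then show "0 \<le> min T (next_grid_point c n (\<tau> \<omega>))"
    using \<tau> \<open>0 \<le> T\<close> less_next_grid_point[of "\<tau> \<omega>" c n] unfolding is_stopping_time_def by force
next
  fix t :: real assume "0 \<le> t"
  show "{\<omega> \<in> space M. min T (next_grid_point c n (\<tau> \<omega>)) \<le> t} \<in> sets (F t)"
  proof (cases "T \<le> t")
    case True
    then have "{\<omega> \<in> space M. min T (next_grid_point c n (\<tau> \<omega>)) \<le> t} = space (F t)"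
      using filtered_prob_spaceD(2)[OF F \<open>0 \<le> t\<close>] by auto
    then show ?thesis by simp
  next
    case False
    then have "{\<omega> \<in> space M. min T (next_grid_point c n (\<tau> \<omega>)) \<le> t}
        = {\<omega> \<in> space M. \<tau> \<omega> < c + of_int \<lfloor>(t - c) * 2 ^ n\<rfloor> / 2 ^ n}"
      by (simp add: next_grid_point_le_iff min_le_iff_disj)
    then show ?thesis
      using stopping_time_less_sets[OF F \<tau> grid_point_le \<open>0 \<le> t\<close>] by simp
  qed
qed

lemma next_grid_point_tendsto: "(\<lambda>n. next_grid_point c n r) \<longlonglongrightarrow> r"
proof (rule tendsto_sandwich)
  show "\<forall>\<^sub>F n in sequentially. r \<le> next_grid_point c n r"
    using less_next_grid_point by (simp add: less_imp_le)
  show "\<forall>\<^sub>F n in sequentially. next_grid_point c n r \<le> r + (1 / 2) ^ n"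
    using next_grid_point_le by (simp add: power_one_over)
  have "(\<lambda>n. r + (1 / 2 :: real) ^ n) \<longlonglongrightarrow> r + 0"
    by (intro tendsto_add tendsto_const LIMSEQ_realpow_zero) simp_all
  then show "(\<lambda>n. r + (1 / 2 :: real) ^ n) \<longlonglongrightarrow> r" by simp
qed simp

text \<open>A countable set has only countably many dyadic translates, so it misses
  every dyadic grid \<open>c + 2\<^sup>-\<^sup>n \<int>\<close> for some offset \<open>c\<close>.\<close>

lemma exists_dyadic_grid_avoiding:
  fixes B :: "real set"
  assumes "countable B"
  shows "\<exists>c. \<forall>(k::int) (n::nat). c + of_int k / 2 ^ n \<notin> B"
proof -
  let ?Bad = "(\<lambda>(b, k::int, n::nat). b - of_int k / 2 ^ n) ` (B \<times> UNIV \<times> UNIV)"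
  have "countable ?Bad" using assms by (intro countable_image countable_SIGMA) auto
  then obtain c where "c \<notin> ?Bad" using uncountable_UNIV_real by (metis UNIV_eq_I)
  then have "c + of_int k / 2 ^ n \<notin> B" for k n
    by (auto intro!: rev_image_eqI[of "(c + of_int k / 2 ^ n, k, n)"])
  then show ?thesis by blast
qed

theorem lemmaB1:
  fixes M :: "'a measure" and F :: "real \<Rightarrow> 'a measure"
    and T x y :: real and X Y :: "real \<Rightarrow> 'a \<Rightarrow> real" and \<tau> :: "'a \<Rightarrow> real"
  assumes "filtered_prob_space M F"
    and "T > 0"
    and "admissible M F x T X"
    and "admissible M F y T Y"
    and "is_stopping_time M F \<tau>"
    and "\<forall>\<omega>\<in>space M. \<tau> \<omega> \<le> T"
  shows "\<exists>\<tau>n :: nat \<Rightarrow> 'a \<Rightarrow> real.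
           (\<forall>n. is_stopping_time M F (\<tau>n n)) \<and>
           (\<forall>n. \<forall>\<omega>\<in>space M. \<tau> \<omega> \<le> \<tau>n n \<omega> \<and> \<tau>n n \<omega> \<le> T) \<and>
           (AE \<omega> in M. \<tau> \<omega> < T \<longrightarrow>
              decseq (\<lambda>n. \<tau>n n \<omega>) \<and> (\<lambda>n. \<tau>n n \<omega>) \<longlonglongrightarrow> \<tau> \<omega>) \<and>
           (\<forall>n. AE \<omega> in M. \<tau>n n \<omega> < T \<longrightarrow>
              jump X (\<tau>n n \<omega>) \<omega> = 0 \<and> jump Y (\<tau>n n \<omega>) \<omega> = 0)"
proof -
  let ?jump_times = "\<lambda>Z. {t. \<not> (AE \<omega> in M. jump Z t \<omega> = 0)}"
  have "countable (?jump_times X \<union> ?jump_times Y)"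
    using admissible_countable_nonnull_jump_times assms(1,3,4) by blast
  then obtain c where c: "\<And>k n. c + of_int k / 2 ^ n \<notin> ?jump_times X \<union> ?jump_times Y"
    using exists_dyadic_grid_avoiding by blast
  have grid_no_jumps: "AE \<omega> in M. \<forall>k n. jump X (c + of_int k / 2 ^ n) \<omega> = 0 \<and>
      jump Y (c + of_int k / 2 ^ n) \<omega> = 0"
    using c by (simp add: AE_all_countable AE_conj_iff)
  define \<tau>n where "\<tau>n n \<omega> = min T (next_grid_point c n (\<tau> \<omega>))" for n \<omega>
  show ?thesis
  proof (intro exI[of _ \<tau>n] conjI allI)
    show "is_stopping_time M F (\<tau>n n)" for n
      unfolding \<tau>n_def using assms(2) by (intro stopping_time_min_next_grid_point assms(1,5)) simp
    show "\<forall>\<omega>\<in>space M. \<tau> \<omega> \<le> \<tau>n n \<omega> \<and> \<tau>n n \<omega> \<le> T" for n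
      using assms(6) less_next_grid_point by (auto simp: \<tau>n_def less_imp_le)
    show "AE \<omega> in M. \<tau> \<omega> < T \<longrightarrow> decseq (\<lambda>n. \<tau>n n \<omega>) \<and> (\<lambda>n. \<tau>n n \<omega>) \<longlonglongrightarrow> \<tau> \<omega>"
    proof (intro AE_I2 impI conjI)
      show "decseq (\<lambda>n. \<tau>n n \<omega>)" for \<omega>
        unfolding decseq_Suc_iff \<tau>n_def using next_grid_point_Suc_le by (simp add: min.coboundedI2)
      fix \<omega> assume "\<tau> \<omega> < T"
      have "(\<lambda>n. \<tau>n n \<omega>) \<longlonglongrightarrow> min T (\<tau> \<omega>)"
        unfolding \<tau>n_def by (intro tendsto_min tendsto_const next_grid_point_tendsto)
      with \<open>\<tau> \<omega> < T\<close> show "(\<lambda>n. \<tau>n n \<omega>) \<longlonglongrightarrow> \<tau> \<omega>" by simp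
    qed
    show "AE \<omega> in M. \<tau>n n \<omega> < T \<longrightarrow> jump X (\<tau>n n \<omega>) \<omega> = 0 \<and> jump Y (\<tau>n n \<omega>) \<omega> = 0" for n
      using grid_no_jumps
    proof eventually_elim
      case (elim \<omega>)
      show ?case
        using elim[rule_format, of "\<lfloor>(\<tau> \<omega> - c) * 2 ^ n\<rfloor> + 1" n]
        by (simp add: \<tau>n_def next_grid_point_def)
    qed
  qed
qed

end
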